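(* Let $\mathcal{M}=(\pi,x)$ be an incentive compatible auction mechanism with display prices. Then for every advertiser $i$, every display price profile $\mathbf{p}$ and every cost-report profile $\mathbf{c}'_{-i}$ of the others, there is a quantity $U_i(\mathbf{c}'_{-i},\mathbf{p})$ not depending on $i$'s cost report such that for all $c_i\in[\underline{c}_i,\overline{c}_i]$, $$x_i(c_i,\mathbf{c}'_{-i},\mathbf{p})=v_i(c_i,p_i)\pi_i(c_i,\mathbf{c}'_{-i},\mathbf{p})-\lambda_i(p_i)\int_{c_i}^{\overline{c}_i}\pi_i(z,\mathbf{c}'_{-i},\mathbf{p})\,dz-U_i(\mathbf{c}'_{-i},\mathbf{p}).$$
   Context: There are advertisers $N=\{1,\dots,n\}$ competing for a single ad slot. Advertiser $i$ has a private product cost $c_i\in[\underline{c}_i,\overline{c}_i]$ and sets a display price $p_i$. Her conversion-rate function is $\lambda_i:\mathbb{R}\to(0,1]$, and her value when displayed at price $p_i$ is $v_i(c_i,p_i)=(p_i-c_i)\lambda_i(p_i)$. Each advertiser reports a cost $c_i'$ and a display price $p_i$; write $\mathbf{c}'=(c_i',\mathbf{c}'_{-i})$, $\mathbf{p}=(p_i,\mathbf{p}_{-i})$. An auction mechanism $\mathcal{M}=(\pi,x)$ consists of allocation functions $\pi_i(\mathbf{c}',\mathbf{p})\in\{0,1\}$ (at most one advertiser wins the slot) and payment functions $x_i(\mathbf{c}',\mathbf{p})\in\mathbb{R}$. The utility of advertiser $i$ with true cost $c_i$ is $u_i(c_i,\mathbf{c}',\mathbf{p},\mathcal{M})=v_i(c_i,p_i)\pi_i(\mathbf{c}',\mathbf{p})-x_i(\mathbf{c}',\mathbf{p})$.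 $\mathcal{M}$ is incentive compatible (IC) if for all $i$, all $c_i$, all $\mathbf{p}$ and all $\mathbf{c}'$: $u_i(c_i,(c_i,\mathbf{c}'_{-i}),\mathbf{p},\mathcal{M})\ge u_i(c_i,(c_i',\mathbf{c}'_{-i}),\mathbf{p},\mathcal{M})$. *)

theory Defs
  imports "HOL-Analysis.Analysis"
begin

text \<open>Cost reports and display
prices are profiles 'i => real. An allocation rule alloc i c' p and a payment rule
x i c' p take advertiser i, the reported-cost profile c' and the price profile p.\<close>

definition value_fn :: "('i \<Rightarrow> real \<Rightarrow> real) \<Rightarrow> 'i \<Rightarrow> real \<Rightarrow> real \<Rightarrow> real" where
  "value_fn lam i c pr = (pr - c) * lam i pr"

definition utility ::
  "('i \<Rightarrow> real \<Rightarrow> real) \<Rightarrow> ('i \<Rightarrow> ('i \<Rightarrow> real) \<Rightarrow> ('i \<Rightarrow> real) \<Rightarrow> real)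
   \<Rightarrow> ('i \<Rightarrow> ('i \<Rightarrow> real) \<Rightarrow> ('i \<Rightarrow> real) \<Rightarrow> real)
   \<Rightarrow> 'i \<Rightarrow> real \<Rightarrow> ('i \<Rightarrow> real) \<Rightarrow> ('i \<Rightarrow> real) \<Rightarrow> real" where
  "utility lam alloc x i c c' p = value_fn lam i c (p i) * alloc i c' p - x i c' p"

definition mechanism :: "('i::finite \<Rightarrow> ('i \<Rightarrow> real) \<Rightarrow> ('i \<Rightarrow> real) \<Rightarrow> real) \<Rightarrow> bool" where
  "mechanism alloc \<longleftrightarrow> (\<forall>c' p. (\<forall>i. alloc i c' p \<in> {0, 1}) \<and> (\<Sum>i\<in>UNIV. alloc i c' p) \<le> 1)"

definition IC ::
  "('i \<Rightarrow> real \<Rightarrow> real) \<Rightarrow> ('i \<Rightarrow> real) \<Rightarrow> ('i \<Rightarrow> real)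
   \<Rightarrow> ('i \<Rightarrow> ('i \<Rightarrow> real) \<Rightarrow> ('i \<Rightarrow> real) \<Rightarrow> real)
   \<Rightarrow> ('i \<Rightarrow> ('i \<Rightarrow> real) \<Rightarrow> ('i \<Rightarrow> real) \<Rightarrow> real) \<Rightarrow> bool" where
  "IC lam cl cu alloc x \<longleftrightarrow>
    (\<forall>i c p c'. c \<in> {cl i..cu i} \<longrightarrow> c' i \<in> {cl i..cu i} \<longrightarrow>
       utility lam alloc x i c (c'(i := c)) p \<ge> utility lam alloc x i c c' p)"

end

theory Submission
  imports Defs
begin

text \<open>Fix the other reports and the prices, and let \<open>V z\<close> be the utility of advertiser \<open>i\<close>
with true cost \<open>z\<close> reporting truthfully, \<open>a z\<close> its allocation and \<open>L = \<lambda>\<^sub>i(p\<^sub>i)\<close>.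
Incentive compatibility says that deviating from \<open>c\<close> to \<open>z\<close> gains nothing:
\<open>V z + (z - c) L a z \<le> V c\<close>. Adding this to the symmetric inequality shows that \<open>a\<close> is
non-increasing, so a 0/1 allocation is a step function switching from 1 to 0 at a
threshold \<open>t\<close>. The two inequalities also sandwich \<open>V c - V z\<close> between
\<open>(z - c) L a z\<close> and \<open>(z - c) L a c\<close>, which pins \<open>V c - V u\<close> down to \<open>L (t - c) = L \<integral>\<^sub>c\<^sup>u a\<close>,
and the payment formula is just the definition of the utility with \<open>U = V u\<close>.\<close>

lemma IC_deviation_bound:
  assumes ic: "IC lam cl cu alloc x"
    and c: "c \<in> {cl i..cu i}" and z: "z \<in> {cl i..cu i}"
  shows "utility lam alloc x i z (c'(i := z)) p + (z - c) * lam i (p i) * alloc i (c'(i := z)) p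
           \<le> utility lam alloc x i c (c'(i := c)) p"
proof -
  have "utility lam alloc x i c ((c'(i := z))(i := c)) p \<ge> utility lam alloc x i c (c'(i := z)) p"
    using ic c z unfolding IC_def by (metis fun_upd_same)
  then show ?thesis
    by (simp add: utility_def value_fn_def algebra_simps)
qed

lemma deviation_bound_antimono:
  fixes V a :: "real \<Rightarrow> real"
  assumes L: "L > 0"
    and bound: "\<And>c z. c \<in> {l..u} \<Longrightarrow> z \<in> {l..u} \<Longrightarrow> V z + (z - c) * L * a z \<le> V c"
    and z: "z \<in> {l..u}" and w: "w \<in> {l..u}" and zw: "z \<le> w"
  shows "a w \<le> a z"
proof -
  have "(w - z) * L * (a w - a z) \<le> 0"
    using bound[OF z w] bound[OF w z] by (simp add: algebra_simps)
  then show ?thesis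
    using L zw by (cases "z = w") (auto simp: mult_le_0_iff)
qed

lemma binary_antimono_threshold:
  fixes a :: "real \<Rightarrow> real"
  assumes cu: "c \<le> u"
    and binary: "\<And>z. z \<in> {c..u} \<Longrightarrow> a z \<in> {0, 1}"
    and antimono: "\<And>z w. z \<in> {c..u} \<Longrightarrow> w \<in> {c..u} \<Longrightarrow> z \<le> w \<Longrightarrow> a w \<le> a z"
  obtains t where "t \<in> {c..u}"
    and "\<And>z. c \<le> z \<Longrightarrow> z < t \<Longrightarrow> a z = 1"
    and "\<And>z. t < z \<Longrightarrow> z \<le> u \<Longrightarrow> a z = 0"
proof
  define S where "S = insert c {z \<in> {c..u}. a z = 1}"
  have bdd: "bdd_above S"
    unfolding S_def by (rule bdd_aboveI[of _ u]) (use cu in auto)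
  show "Sup S \<in> {c..u}"
    using bdd cu by (auto intro: cSup_upper cSup_least simp: S_def)
  show "a z = 1" if z: "c \<le> z" "z < Sup S" for z
  proof -
    have "S \<noteq> {}"
      by (simp add: S_def)
    then obtain w where "w \<in> S" "z < w"
      using z(2) less_cSup_iff[OF _ bdd] by blast
    then have "w \<in> {c..u}" "a w = 1"
      using z by (auto simp: S_def)
    then show ?thesis
      using antimono[of z w] binary[of z] \<open>z < w\<close> z by fastforce
  qed
  show "a z = 0" if "Sup S < z" "z \<le> u" for z
  proof -
    have "z \<notin> S"
      using cSup_upper[OF _ bdd] that by force
    then show ?thesis
      using binary[of z] that cSup_upper[OF _ bdd, of c] by (auto simp: S_def)
  qed
qed

lemma integral_threshold_step:
  fixes a :: "real \<Rightarrow> real"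
  assumes t: "t \<in> {c..u}"
    and one: "\<And>z. c \<le> z \<Longrightarrow> z < t \<Longrightarrow> a z = 1"
    and zero: "\<And>z. t < z \<Longrightarrow> z \<le> u \<Longrightarrow> a z = 0"
  shows "integral {c..u} a = t - c"
proof -
  have "(a has_integral (t - c)) {c..t}"
    by (rule has_integral_spike[of "{t}" _ _ "\<lambda>_. 1"])
       (use t one has_integral_const_real[of "1::real" c t] in auto)
  moreover have "(a has_integral 0) {t..u}"
    by (rule has_integral_spike[of "{t}" _ _ "\<lambda>_. 0"]) (use zero in auto)
  ultimately have "(a has_integral (t - c + 0)) {c..u}"
    using t by (intro has_integral_combine) auto
  then show ?thesis
    by (simp add: integral_unique)
qed

lemma deviation_bound_threshold_gap:
  fixes V a :: "real \<Rightarrow> real"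
  assumes L: "L > 0"
    and bound: "\<And>c z. c \<in> {l..u} \<Longrightarrow> z \<in> {l..u} \<Longrightarrow> V z + (z - c) * L * a z \<le> V c"
    and a_range: "\<And>z. z \<in> {l..u} \<Longrightarrow> 0 \<le> a z \<and> a z \<le> 1"
    and c: "c \<in> {l..u}" and t: "t \<in> {c..u}"
    and one: "\<And>z. c \<le> z \<Longrightarrow> z < t \<Longrightarrow> a z = 1"
    and zero: "\<And>z. t < z \<Longrightarrow> z \<le> u \<Longrightarrow> a z = 0"
  shows "V c - V u = L * (t - c)"
proof -
  define d where "d = (V c - V u) / L"
  have d_le: "d \<le> z - c \<longleftrightarrow> V c - V u \<le> (z - c) * L" for z
    using L by (simp add: d_def pos_divide_le_eq)
  have le_d: "z - c \<le> d \<longleftrightarrow> (z - c) * L \<le> V c - V u" for z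
    using L by (simp add: d_def pos_le_divide_eq)
  have sandwich: "(y - x) * L * a y \<le> V x - V y \<and> V x - V y \<le> (y - x) * L * a x"
    if "x \<in> {l..u}" "y \<in> {l..u}" for x y
    using bound[OF that] bound[OF that(2,1)] by (simp add: algebra_simps)
  have nonneg: "0 \<le> (y - x) * L * a y" if "x \<le> y" "y \<in> {l..u}" for x y
    using that L a_range by simp
  have at_most: "(y - x) * L * a x \<le> (y - x) * L" if "x \<le> y" "x \<in> {l..u}" for x y
    using that L a_range[OF that(2)] by (simp add: mult_left_le)
  have u: "u \<in> {l..u}"
    using c by auto
  have won: "z - c \<le> d" if "z \<in> {c..u}" "a z = 1" for z
  proof -
    have z: "z \<in> {l..u}"
      using that c by auto
    show ?thesis
      using sandwich[OF c z] sandwich[OF z u] nonneg[of z u] u that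
      unfolding le_d by simp
  qed
  have lost: "d \<le> z - c" if "z \<in> {c..u}" "a z = 0" for z
  proof -
    have z: "z \<in> {l..u}"
      using that c by auto
    show ?thesis
      using sandwich[OF c z] sandwich[OF z u] at_most[of c z] c that
      unfolding d_le by simp
  qed
  have "t - c \<le> d"
  proof (cases "c < t")
    case True
    have "t \<le> c + d"
      by (rule dense_le_bounded[OF True]) (use t one won in \<open>fastforce simp: algebra_simps\<close>)
    then show ?thesis
      by simp
  next
    case False
    then show ?thesis
      using t sandwich[OF c u] nonneg[of c u] u unfolding le_d by simp
  qed
  moreover have "d \<le> t - c"
  proof (cases "t < u")
    case True
    have "c + d \<le> t"
      by (rule dense_ge_bounded[OF True]) (use t zero lost in \<open>fastforce simp: algebra_simps\<close>)
    then show ?thesis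
      by simp
  next
    case False
    then show ?thesis
      using t sandwich[OF c u] at_most[of c u] c unfolding d_le by simp
  qed
  ultimately have "d = t - c"
    by simp
  then show ?thesis
    using L by (simp add: d_def field_simps)
qed

lemma deviation_bound_envelope:
  fixes V a :: "real \<Rightarrow> real"
  assumes L: "L > 0"
    and bound: "\<And>c z. c \<in> {l..u} \<Longrightarrow> z \<in> {l..u} \<Longrightarrow> V z + (z - c) * L * a z \<le> V c"
    and binary: "\<And>z. z \<in> {l..u} \<Longrightarrow> a z \<in> {0, 1}"
    and c: "c \<in> {l..u}"
  shows "V c - V u = L * integral {c..u} a"
proof -
  have cu: "c \<le> u"
    using c by simp
  have "a w \<le> a z" if "z \<in> {c..u}" "w \<in> {c..u}" "z \<le> w" for z w
    using deviation_bound_antimono[OF L bound] that c by auto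
  moreover have "a z \<in> {0, 1}" if "z \<in> {c..u}" for z
    using binary that c by auto
  ultimately obtain t where t: "t \<in> {c..u}"
    and one: "\<And>z. c \<le> z \<Longrightarrow> z < t \<Longrightarrow> a z = 1"
    and zero: "\<And>z. t < z \<Longrightarrow> z \<le> u \<Longrightarrow> a z = 0"
    using binary_antimono_threshold[OF cu] by blast
  have "0 \<le> a z \<and> a z \<le> 1" if "z \<in> {l..u}" for z
    using binary[OF that] by auto
  then have "V c - V u = L * (t - c)"
    using deviation_bound_threshold_gap[OF L bound _ c t one zero] by blast
  with integral_threshold_step[OF t one zero] show ?thesis
    by simp
qed

theorem lemma2:
  fixes lam :: "'i::finite \<Rightarrow> real \<Rightarrow> real"
    and cl cu :: "'i \<Rightarrow> real"
    and alloc x :: "'i \<Rightarrow> ('i \<Rightarrow> real) \<Rightarrow> ('i \<Rightarrow> real) \<Rightarrow> real"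
  assumes lam_range: "\<And>i r. 0 < lam i r \<and> lam i r \<le> 1"
    and mech: "mechanism alloc"
    and ic: "IC lam cl cu alloc x"
  shows "\<forall>i p c'. \<exists>U::real. \<forall>c \<in> {cl i..cu i}.
           x i (c'(i := c)) p =
             value_fn lam i c (p i) * alloc i (c'(i := c)) p
             - lam i (p i) * integral {c..cu i} (\<lambda>z. alloc i (c'(i := z)) p)
             - U"
proof (intro allI)
  fix i p and c' :: "'i \<Rightarrow> real"
  define V where "V z = utility lam alloc x i z (c'(i := z)) p" for z
  define a where "a z = alloc i (c'(i := z)) p" for z
  have envelope: "V c - V (cu i) = lam i (p i) * integral {c..cu i} a" if "c \<in> {cl i..cu i}" for c
  proof (rule deviation_bound_envelope[OF _ _ _ that])
    show "0 < lam i (p i)"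
      using lam_range by blast
    show "a z \<in> {0, 1}" for z
      using mech unfolding mechanism_def a_def by blast
    show "V z + (z - c) * lam i (p i) * a z \<le> V c"
      if "c \<in> {cl i..cu i}" "z \<in> {cl i..cu i}" for c z
      using IC_deviation_bound[OF ic that] unfolding V_def a_def .
  qed
  have "x i (c'(i := c)) p =
          value_fn lam i c (p i) * alloc i (c'(i := c)) p
          - lam i (p i) * integral {c..cu i} (\<lambda>z. alloc i (c'(i := z)) p) - V (cu i)"
    if "c \<in> {cl i..cu i}" for c
    using envelope[OF that] unfolding V_def a_def utility_def by (simp add: algebra_simps)
  then show "\<exists>U. \<forall>c\<in>{cl i..cu i}. x i (c'(i := c)) p =
             value_fn lam i c (p i) * alloc i (c'(i := c)) p
             - lam i (p i) * integral {c..cu i} (\<lambda>z. alloc i (c'(i := z)) p) - U"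
    by blast
qed

end
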